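(* Let $W_0$ be the set of ordinals $\le \Omega$, where $\Omega$ is the first uncountable ordinal, with the order topology, and let $W=W_0\setminus\{\Omega\}$ with the subspace topology. Then $(C(W,W_0),\tau_\Gamma)$ is not regular.
   Context: For topological spaces $X,Y$, $C(X,Y)$ denotes the set of continuous maps $X\to Y$; each $f\in C(X,Y)$ is identified with its graph $\{(x,f(x)):x\in X\}\subset X\times Y$. For $G$ open in $X\times Y$ let $F_G=\{f\in C(X,Y): f\subset G\}$. The graph topology $\tau_\Gamma$ on $C(X,Y)$ is the topology having the sets $F_G$ ($G$ open in $X\times Y$) as a base. *)

theory Defs
  imports "HOL-Analysis.Analysis"
begin

text \<open>C(X,Y): continuous maps X -> Y. A map is represented by a function that is
  extensional on the carrier of X, so that it is determined by its graph.\<close>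
definition cont_maps :: "'a topology \<Rightarrow> 'b topology \<Rightarrow> ('a \<Rightarrow> 'b) set" where
  "cont_maps X Y = {f. continuous_map X Y f \<and> f \<in> extensional (topspace X)}"

definition graph_of :: "'a topology \<Rightarrow> ('a \<Rightarrow> 'b) \<Rightarrow> ('a \<times> 'b) set" where
  "graph_of X f = {(x, f x) | x. x \<in> topspace X}"

definition graph_nbhd :: "'a topology \<Rightarrow> 'b topology \<Rightarrow> ('a \<times> 'b) set \<Rightarrow> ('a \<Rightarrow> 'b) set" where
  "graph_nbhd X Y G = {f \<in> cont_maps X Y. graph_of X f \<subseteq> G}"

definition graph_topology :: "'a topology \<Rightarrow> 'b topology \<Rightarrow> ('a \<Rightarrow> 'b) topology" where
  "graph_topology X Y =
     topology_generated_by {graph_nbhd X Y G | G. openin (prod_topology X Y) G}"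

end

theory Submission imports Defs begin

(* Write W = {..<\<Omega>} for the countable ordinals and Y for the whole type, i.e. W_0 = [0,\<Omega>].
   Suppose the graph topology on C(W, W_0) were regular.  The inclusion f of W lies in the
   open set F_{W \<times> W}, so by regularity some basic neighbourhood F_H of f has its closure
   inside F_{W \<times> W}; since f \<in> F_H, the open set H contains the diagonal of W.
   The key combinatorial fact (column lemma) is that every open H \<supseteq> diagonal has an
   isolated point p of W whose column {y. (p, y) \<in> H} is cofinal in \<Omega>: otherwise a
   sequence a_0 < a_1 < ... dominating the column bounds has a countable supremum \<sigma>, a box
   around (\<sigma>, \<sigma>) inside H meets one of these columns above its bound.
   Redefining f at p to the value y (for y in that column) keeps the graph inside H, and
   as y \<rightarrow> \<Omega> these maps approach f redefined at p to \<Omega>.  Hence that map lies in the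
   closure of F_H, although its graph leaves W \<times> W: a contradiction. *)

section \<open>Order-theoretic facts about the first uncountable ordinal\<close>

lemma countable_bounded_below_Omega:
  fixes \<Omega> :: "'a :: wellorder"
  assumes uncount: "uncountable {..<\<Omega>}"
    and init_count: "\<forall>y < \<Omega>. countable {..<y}"
    and S: "countable S" "S \<subseteq> {..<\<Omega>}"
  shows "\<exists>z<\<Omega>. \<forall>s\<in>S. s < z"
proof (rule ccontr)
  assume "\<not> ?thesis"
  then have "\<forall>z<\<Omega>. \<exists>s\<in>S. z \<le> s"
    by (meson not_le)
  then have "{..<\<Omega>} \<subseteq> (\<Union>s\<in>S. {..s})"
    by auto
  moreover have "countable {..s}" if "s \<in> S" for s
  proof -
    have "{..s} = insert s {..<s}"
      by auto
    then show ?thesis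
      using that S init_count by auto
  qed
  then have "countable (\<Union>s\<in>S. {..s})"
    using S(1) by blast
  ultimately show False
    using uncount countable_subset by blast
qed

lemma sequence_supremum_below_Omega:
  fixes \<Omega> :: "'a :: wellorder" and a :: "nat \<Rightarrow> 'a"
  assumes uncount: "uncountable {..<\<Omega>}"
    and init_count: "\<forall>y < \<Omega>. countable {..<y}"
    and mono: "strict_mono a" and below: "\<And>n. a n < \<Omega>"
  obtains \<sigma> where "\<sigma> < \<Omega>" "\<And>n. a n < \<sigma>" "\<And>w. w < \<sigma> \<Longrightarrow> \<exists>n. w < a n"
proof -
  obtain z where z: "z < \<Omega>" "\<forall>n. a n < z"
    using countable_bounded_below_Omega[OF uncount init_count, of "range a"] below by auto
  define \<sigma> where "\<sigma> = (LEAST z. \<forall>n. a n < z)"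
  have "\<forall>n. a n < \<sigma>"
    unfolding \<sigma>_def by (rule LeastI[of _ z]) (use z in auto)
  moreover have "\<sigma> < \<Omega>"
    using Least_le[of "\<lambda>z. \<forall>n. a n < z" z] z unfolding \<sigma>_def by simp
  moreover have "\<exists>n. w < a n" if w: "w < \<sigma>" for w
  proof -
    obtain n where "w \<le> a n"
      using not_less_Least[OF w[unfolded \<sigma>_def]] by (auto simp: not_less)
    also have "a n < a (Suc n)"
      using mono by (simp add: strict_mono_def)
    finally show ?thesis by blast
  qed
  ultimately show ?thesis using that by blast
qed

lemma dominating_sequence_below_Omega:
  fixes \<Omega> :: "'a :: wellorder" and \<phi> :: "'a \<Rightarrow> 'a"
  assumes uncount: "uncountable {..<\<Omega>}"
    and init_count: "\<forall>y < \<Omega>. countable {..<y}"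
    and \<phi>: "\<And>p. p < \<Omega> \<Longrightarrow> \<phi> p < \<Omega>"
  obtains a :: "nat \<Rightarrow> 'a" where "strict_mono a" "\<And>n. a n < \<Omega>"
    "\<And>n p. p \<le> a n \<Longrightarrow> \<phi> p < a (Suc n)"
proof -
  have step: "\<exists>z<\<Omega>. \<forall>s \<in> insert \<alpha> (\<phi> ` {..\<alpha>}). s < z" if "\<alpha> < \<Omega>" for \<alpha>
  proof (rule countable_bounded_below_Omega[OF uncount init_count])
    have "{..\<alpha>} = insert \<alpha> {..<\<alpha>}"
      by auto
    then show "countable (insert \<alpha> (\<phi> ` {..\<alpha>}))"
      using that init_count by auto
    show "insert \<alpha> (\<phi> ` {..\<alpha>}) \<subseteq> {..<\<Omega>}"
      using that \<phi> by auto
  qed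
  define nxt where "nxt \<alpha> = (SOME z. z < \<Omega> \<and> (\<forall>s \<in> insert \<alpha> (\<phi> ` {..\<alpha>}). s < z))" for \<alpha>
  have nxt: "nxt \<alpha> < \<Omega> \<and> \<alpha> < nxt \<alpha> \<and> (\<forall>p\<le>\<alpha>. \<phi> p < nxt \<alpha>)" if "\<alpha> < \<Omega>" for \<alpha>
    using someI_ex[OF step[OF that, unfolded Bex_def[symmetric]]] unfolding nxt_def by auto
  obtain x0 where x0: "x0 < \<Omega>"
    using uncount by (metis countable_empty equals0I lessThan_iff)
  define a where "a n = rec_nat x0 (\<lambda>_. nxt) n" for n
  have a_Suc: "a (Suc n) = nxt (a n)" for n
    by (simp add: a_def)
  have a_below: "a n < \<Omega>" for n
    by (induction n) (use x0 nxt in \<open>auto simp: a_def\<close>)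
  show ?thesis
  proof
    show "strict_mono a"
      unfolding strict_mono_Suc_iff using nxt a_below a_Suc by auto
    show "\<phi> p < a (Suc n)" if "p \<le> a n" for n p
      using nxt[OF a_below[of n]] that a_Suc by auto
  qed (rule a_below)
qed

text \<open>In a well-ordered space every nonempty half-open interval ]b, c] contains an isolated
  point, namely the successor of b.\<close>
lemma isolated_point_in_interval:
  fixes b c :: "'a :: {wellorder, linorder_topology}"
  assumes "b < c"
  obtains p where "b < p" "p \<le> c" "open {p}"
proof
  define p where "p = (LEAST z. b < z)"
  show bp: "b < p"
    unfolding p_def by (rule LeastI[of _ c]) (rule assms)
  show "p \<le> c"
    unfolding p_def by (rule Least_le) (rule assms)
  have no_between: "\<not> (b < x \<and> x < p)" for x
    using not_less_Least[of x "\<lambda>z. b < z"] unfolding p_def by blast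
  show "open {p}"
  proof (cases "\<exists>q. p < q")
    case True
    define q where "q = (LEAST z. p < z)"
    have "p < q"
      unfolding q_def using True by (metis LeastI)
    moreover have "\<not> (p < x \<and> x < q)" for x
      using not_less_Least[of x "\<lambda>z. p < z"] unfolding q_def by blast
    ultimately have "{b<..<q} = {p}"
      using bp no_between by (auto simp: not_less) (meson antisym_conv1 not_less)
    then show ?thesis
      by (metis open_greaterThanLessThan)
  next
    case False
    then have "{b<..} = {p}"
      using bp no_between by (auto simp: not_less) (meson antisym_conv1 not_less)
    then show ?thesis
      by (metis open_greaterThan)
  qed
qed

section \<open>The graph topology\<close>

lemma graph_nbhd_iff:
  "f \<in> graph_nbhd X Y G \<longleftrightarrow> f \<in> cont_maps X Y \<and> (\<forall>x \<in> topspace X. (x, f x) \<in> G)"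
  by (auto simp: graph_nbhd_def graph_of_def)

lemma openin_graph_topology_graph_nbhd:
  assumes "openin (prod_topology X Y) G"
  shows "openin (graph_topology X Y) (graph_nbhd X Y G)"
  unfolding graph_topology_def using assms by (intro topology_generated_by_Basis) blast

lemma topspace_graph_topology: "topspace (graph_topology X Y) = cont_maps X Y"
proof -
  have "graph_nbhd X Y (topspace (prod_topology X Y)) = cont_maps X Y"
    by (auto simp: graph_nbhd_iff cont_maps_def continuous_map_def)
  moreover have "openin (prod_topology X Y) (topspace (prod_topology X Y))"
    by (rule openin_topspace)
  ultimately show ?thesis
    unfolding graph_topology_def topology_generated_by_topspace
    by (auto simp: graph_nbhd_def)
qed

lemma graph_topology_basic_nbhd:
  assumes "openin (graph_topology X Y) O'" "f \<in> O'"
  obtains G where "openin (prod_topology X Y) G" "f \<in> graph_nbhd X Y G" "graph_nbhd X Y G \<subseteq> O'"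
proof -
  let ?B = "\<lambda>f O'. \<exists>G. openin (prod_topology X Y) G \<and> f \<in> graph_nbhd X Y G \<and> graph_nbhd X Y G \<subseteq> O'"
  have "generate_topology_on {graph_nbhd X Y G | G. openin (prod_topology X Y) G} O'"
    using assms(1) unfolding graph_topology_def openin_topology_generated_by_iff .
  then have "\<forall>f\<in>O'. ?B f O'"
  proof induction
    case (Int A B)
    show ?case
    proof
      fix f assume f: "f \<in> A \<inter> B"
      obtain G1 where G1: "openin (prod_topology X Y) G1" "f \<in> graph_nbhd X Y G1" "graph_nbhd X Y G1 \<subseteq> A"
        using Int.IH(1) f by blast
      obtain G2 where G2: "openin (prod_topology X Y) G2" "f \<in> graph_nbhd X Y G2" "graph_nbhd X Y G2 \<subseteq> B"
        using Int.IH(2) f by blast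
      have "graph_nbhd X Y (G1 \<inter> G2) = graph_nbhd X Y G1 \<inter> graph_nbhd X Y G2"
        by (auto simp: graph_nbhd_def)
      then show "?B f (A \<inter> B)"
        using G1 G2 by (intro exI[of _ "G1 \<inter> G2"]) auto
    qed
  next
    case (UN K)
    show ?case
    proof
      fix f assume "f \<in> \<Union>K"
      then obtain A where "A \<in> K" "f \<in> A"
        by blast
      then show "?B f (\<Union>K)"
        using UN.IH by (meson Union_upper subset_trans)
    qed
  next
    case Empty
    show ?case by simp
  next
    case (Basis S)
    then obtain G where "openin (prod_topology X Y) G" "S = graph_nbhd X Y G"
      by blast
    then show ?case
      by blast
  qed
  then obtain G where "openin (prod_topology X Y) G" "f \<in> graph_nbhd X Y G" "graph_nbhd X Y G \<subseteq> O'"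
    using assms(2) by blast
  then show ?thesis
    by (rule that)
qed

lemma regular_graph_topology_shrink:
  assumes "regular_space (graph_topology X Y)"
    and "openin (prod_topology X Y) O'" "f \<in> graph_nbhd X Y O'"
  obtains H where "openin (prod_topology X Y) H" "f \<in> graph_nbhd X Y H"
    "graph_topology X Y closure_of graph_nbhd X Y H \<subseteq> graph_nbhd X Y O'"
proof -
  let ?T = "graph_topology X Y"
  have "neighbourhood_base_of (closedin ?T) ?T"
    using assms(1) by (simp add: neighbourhood_base_of_closedin)
  moreover have "openin ?T (graph_nbhd X Y O') \<and> f \<in> graph_nbhd X Y O'"
    using assms(2,3) openin_graph_topology_graph_nbhd by blast
  ultimately obtain U C where
    UC: "openin ?T U" "closedin ?T C" "f \<in> U" "U \<subseteq> C" "C \<subseteq> graph_nbhd X Y O'"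
    unfolding neighbourhood_base_of by meson
  obtain H where H: "openin (prod_topology X Y) H" "f \<in> graph_nbhd X Y H" "graph_nbhd X Y H \<subseteq> U"
    using graph_topology_basic_nbhd[OF UC(1,3)] by blast
  have "?T closure_of graph_nbhd X Y H \<subseteq> C"
    using H(3) UC(2,4) by (intro closure_of_minimal) auto
  with H UC(5) show ?thesis
    using that by blast
qed

section \<open>Redefining a continuous map at an isolated point\<close>

definition redefine_at :: "'a topology \<Rightarrow> ('a \<Rightarrow> 'b) \<Rightarrow> 'a \<Rightarrow> 'b \<Rightarrow> 'a \<Rightarrow> 'b" where
  "redefine_at X f p c = restrict (f(p := c)) (topspace X)"

lemma continuous_map_fun_upd_clopen_point:
  assumes f: "continuous_map X Y f" and p: "openin X {p}" "closedin X {p}"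
    and c: "c \<in> topspace Y"
  shows "continuous_map X Y (f(p := c))"
  unfolding continuous_map_def
proof (intro conjI allI impI)
  show "f(p := c) \<in> topspace X \<rightarrow> topspace Y"
    using f c by (auto simp: continuous_map_def)
  fix U assume U: "openin Y U"
  have "p \<in> topspace X"
    using openin_subset[OF p(1)] by blast
  then have preimage: "{x \<in> topspace X. (f(p := c)) x \<in> U}
      = ({x \<in> topspace X. f x \<in> U} - {p}) \<union> (if c \<in> U then {p} else {})"
    by auto
  have "openin X ({x \<in> topspace X. f x \<in> U} - {p})"
    using f U p(2) by (intro openin_diff) (auto simp: continuous_map_def)
  moreover have "openin X (if c \<in> U then {p} else {})"
    using p(1) by simp
  ultimately show "openin X {x \<in> topspace X. (f(p := c)) x \<in> U}"
    unfolding preimage by (rule openin_Un)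
qed

lemma redefine_at_cont_maps:
  assumes "f \<in> cont_maps X Y" "openin X {p}" "closedin X {p}" "c \<in> topspace Y"
  shows "redefine_at X f p c \<in> cont_maps X Y"
proof -
  have "continuous_map X Y (f(p := c))"
    using assms by (intro continuous_map_fun_upd_clopen_point) (auto simp: cont_maps_def)
  then have "continuous_map X Y (redefine_at X f p c)"
    by (rule continuous_map_eq) (simp add: redefine_at_def)
  then show ?thesis
    by (simp add: cont_maps_def redefine_at_def)
qed

lemma redefine_at_graph_nbhd_iff:
  assumes "f \<in> cont_maps X Y" "openin X {p}" "closedin X {p}" "c \<in> topspace Y"
  shows "redefine_at X f p c \<in> graph_nbhd X Y G \<longleftrightarrow>
           (p, c) \<in> G \<and> (\<forall>x \<in> topspace X - {p}. (x, f x) \<in> G)"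
proof -
  have "p \<in> topspace X"
    using openin_subset[OF assms(2)] by blast
  then show ?thesis
    using redefine_at_cont_maps[OF assms]
    by (auto simp: graph_nbhd_iff redefine_at_def)
qed

text \<open>If c is a limit of points of the column of H over the isolated point p, then the
  map f \<in> F_H redefined to take the value c at p lies in the closure of F_H: it is
  approximated by the maps f redefined at p to values y in that column.\<close>
lemma redefine_at_in_closure:
  assumes f: "f \<in> graph_nbhd X Y H" and p: "openin X {p}" "closedin X {p}"
    and c: "c \<in> topspace Y"
    and column: "\<And>V. openin Y V \<Longrightarrow> c \<in> V \<Longrightarrow> \<exists>y\<in>V. (p, y) \<in> H"
  shows "redefine_at X f p c \<in> graph_topology X Y closure_of graph_nbhd X Y H"
  unfolding in_closure_of
proof (intro conjI allI impI)
  let ?g = "redefine_at X f p c"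
  have f_cont: "f \<in> cont_maps X Y"
    using f by (simp add: graph_nbhd_iff)
  show "?g \<in> topspace (graph_topology X Y)"
    using redefine_at_cont_maps[OF f_cont p c] by (simp add: topspace_graph_topology)
  fix T assume T: "?g \<in> T \<and> openin (graph_topology X Y) T"
  then obtain G where G: "openin (prod_topology X Y) G" "?g \<in> graph_nbhd X Y G" "graph_nbhd X Y G \<subseteq> T"
    using graph_topology_basic_nbhd[of X Y T ?g] by blast
  have pcG: "(p, c) \<in> G" and rest: "\<forall>x \<in> topspace X - {p}. (x, f x) \<in> G"
    using G(2) unfolding redefine_at_graph_nbhd_iff[OF f_cont p c] by blast+
  obtain U V where UV: "openin X U" "openin Y V" "p \<in> U" "c \<in> V" "U \<times> V \<subseteq> G"
    using openin_prod_topology_alt[THEN iffD1, OF G(1), rule_format, OF pcG] by blast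
  obtain y where y: "y \<in> V" "(p, y) \<in> H"
    using column UV(2,4) by blast
  have yY: "y \<in> topspace Y"
    using openin_subset[OF UV(2)] y(1) by blast
  have f_in_H: "\<forall>x \<in> topspace X - {p}. (x, f x) \<in> H"
    using f by (simp add: graph_nbhd_iff)
  have "(p, y) \<in> G"
    using UV(3,5) y(1) by blast
  then have "redefine_at X f p y \<in> graph_nbhd X Y G"
    using rest unfolding redefine_at_graph_nbhd_iff[OF f_cont p yY] by blast
  moreover have "redefine_at X f p y \<in> graph_nbhd X Y H"
    using y(2) f_in_H unfolding redefine_at_graph_nbhd_iff[OF f_cont p yY] by blast
  ultimately show "\<exists>h. h \<in> graph_nbhd X Y H \<and> h \<in> T"
    using G(3) by blast
qed

lemma restrict_id_cont_maps:
  "restrict (\<lambda>x. x) S \<in> cont_maps (subtopology euclidean S) (euclidean :: 'a :: topological_space topology)"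
proof -
  have "continuous_map (subtopology euclidean S) euclidean (restrict (\<lambda>x. x) S)"
    using continuous_map_from_subtopology[OF continuous_map_id]
    by (rule continuous_map_eq) simp
  then show ?thesis
    by (simp add: cont_maps_def)
qed

lemma isolated_point_clopen_in_subtopology:
  fixes p :: "'a :: t1_space"
  assumes "open {p}" "p \<in> S"
  shows "openin (subtopology euclidean S) {p}" "closedin (subtopology euclidean S) {p}"
  using assms by (auto simp: openin_subtopology closedin_subtopology intro!: exI[of _ "{p}"])

lemma cofinal_below_meets_neighbourhoods:
  fixes \<Omega> :: "'a :: linorder_topology"
  assumes cofinal: "\<And>z. z < \<Omega> \<Longrightarrow> \<exists>y. z < y \<and> y < \<Omega> \<and> P y"
    and below: "b < \<Omega>" and V: "openin euclidean V" "\<Omega> \<in> V"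
  shows "\<exists>y\<in>V. P y"
proof -
  obtain z where "z < \<Omega>" "{z<..\<Omega>} \<subseteq> V"
    using open_left[OF _ V(2) below] V(1) by auto
  then show ?thesis
    using cofinal by fastforce
qed

section \<open>The column lemma\<close>

lemma diagonal_point_left_box:
  fixes l b0 :: "'a :: linorder_topology"
  assumes H: "openin (prod_topology (subtopology euclidean S) euclidean) H"
    and l: "(l, l) \<in> H" "l \<in> S" and b0: "b0 < l"
  obtains b where "b < l" "\<And>x y. x \<in> S \<Longrightarrow> b < x \<Longrightarrow> x \<le> l \<Longrightarrow> b < y \<Longrightarrow> y \<le> l \<Longrightarrow> (x, y) \<in> H"
proof -
  obtain U V where UV: "openin (subtopology euclidean S) U" "open V" "l \<in> U" "l \<in> V" "U \<times> V \<subseteq> H"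
    using H l(1) unfolding openin_prod_topology_alt by force
  obtain U0 where U0: "open U0" "U = U0 \<inter> S"
    using UV(1) unfolding openin_subtopology by auto
  obtain b1 where b1: "b1 < l" "{b1<..l} \<subseteq> U0"
    using open_left[OF U0(1) _ b0] UV(3) U0(2) by blast
  obtain b2 where b2: "b2 < l" "{b2<..l} \<subseteq> V"
    using open_left[OF UV(2,4) b0] by blast
  show ?thesis
  proof
    show "max b1 b2 < l"
      using b1 b2 by simp
    show "(x, y) \<in> H" if "x \<in> S" "max b1 b2 < x" "x \<le> l" "max b1 b2 < y" "y \<le> l" for x y
    proof -
      have "x \<in> U" "y \<in> V"
        using that b1(2) b2(2) U0(2) by auto
      then show ?thesis
        using UV(5) by blast
    qed
  qed
qed

text \<open>Whatever bounds \<phi> p < \<Omega> are assigned to the points below \<Omega>, an open set H containing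
  the diagonal has a point (p, y) with p isolated and \<phi> p < y < \<Omega>: a sequence dominating
  the bounds has a supremum \<sigma> < \<Omega>, and a square of H below (\<sigma>, \<sigma>) contains such a point.\<close>
lemma column_exceeds_bounds:
  fixes \<Omega> :: "'a :: {wellorder, linorder_topology}"
  assumes uncount: "uncountable {..<\<Omega>}"
    and init_count: "\<forall>y < \<Omega>. countable {..<y}"
    and H: "openin (prod_topology (subtopology euclidean {..<\<Omega>}) euclidean) H"
    and diag: "\<And>x. x < \<Omega> \<Longrightarrow> (x, x) \<in> H"
    and \<phi>_below: "\<And>p. p < \<Omega> \<Longrightarrow> \<phi> p < \<Omega>"
  obtains p y where "p < \<Omega>" "open {p}" "\<phi> p < y" "y < \<Omega>" "(p, y) \<in> H"
proof -
  obtain a where a: "strict_mono a" "\<And>n. a n < \<Omega>" "\<And>n p. p \<le> a n \<Longrightarrow> \<phi> p < a (Suc n)"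
    using dominating_sequence_below_Omega[where \<phi> = \<phi>, OF uncount init_count \<phi>_below] by blast
  obtain \<sigma> where \<sigma>: "\<sigma> < \<Omega>" "\<And>n. a n < \<sigma>" "\<And>w. w < \<sigma> \<Longrightarrow> \<exists>n. w < a n"
    using sequence_supremum_below_Omega[OF uncount init_count a(1,2)] by blast
  obtain b where b: "b < \<sigma>"
      "\<And>x y. x \<in> {..<\<Omega>} \<Longrightarrow> b < x \<Longrightarrow> x \<le> \<sigma> \<Longrightarrow> b < y \<Longrightarrow> y \<le> \<sigma> \<Longrightarrow> (x, y) \<in> H"
    using diagonal_point_left_box[OF H diag[OF \<sigma>(1)] lessThan_iff[THEN iffD2, OF \<sigma>(1)] \<sigma>(2)[of 0]]
    by blast
  obtain n where n: "b < a n"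
    using \<sigma>(3)[OF b(1)] by blast
  obtain p where p: "b < p" "p \<le> a n" "open {p}"
    using isolated_point_in_interval[OF n] .
  have p_below: "p < \<Omega>"
    using p(2) a(2)[of n] by simp
  have "a n < a (Suc n)"
    using a(1) by (simp add: strict_mono_Suc_iff)
  then have "b < a (Suc n)"
    using n by simp
  moreover have "p \<le> \<sigma>" "a (Suc n) \<le> \<sigma>"
    using p(2) \<sigma>(2)[of n] \<sigma>(2)[of "Suc n"] by simp_all
  ultimately have "(p, a (Suc n)) \<in> H"
    using b(2) p(1) p_below by simp
  moreover have "\<phi> p < a (Suc n)"
    using a(3) p(2) by blast
  ultimately show ?thesis
    using that p_below p(3) a(2) by blast
qed

text \<open>Otherwise choosing a bound
  for each column contradicts the previous lemma.\<close>
lemma cofinal_column: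
  fixes \<Omega> :: "'a :: {wellorder, linorder_topology}"
  assumes uncount: "uncountable {..<\<Omega>}"
    and init_count: "\<forall>y < \<Omega>. countable {..<y}"
    and H: "openin (prod_topology (subtopology euclidean {..<\<Omega>}) euclidean) H"
    and diag: "\<And>x. x < \<Omega> \<Longrightarrow> (x, x) \<in> H"
  obtains p where "p < \<Omega>" "open {p}" "\<And>z. z < \<Omega> \<Longrightarrow> \<exists>y. z < y \<and> y < \<Omega> \<and> (p, y) \<in> H"
proof (rule ccontr)
  note column_found = that
  assume no_column: "\<not> thesis"
  have bounded: "\<exists>z<\<Omega>. open {p} \<longrightarrow> (\<forall>y. z < y \<and> y < \<Omega> \<longrightarrow> (p, y) \<notin> H)" if p: "p < \<Omega>" for p
  proof (rule ccontr)
    assume unbounded: "\<not> ?thesis"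
    then have "open {p}"
      using p by blast
    moreover have "\<exists>y. z < y \<and> y < \<Omega> \<and> (p, y) \<in> H" if "z < \<Omega>" for z
      using unbounded that by blast
    ultimately have thesis
      by (rule column_found[OF p])
    with no_column show False
      by contradiction
  qed
  define \<phi> where "\<phi> p = (SOME z. z < \<Omega> \<and> (open {p} \<longrightarrow> (\<forall>y. z < y \<and> y < \<Omega> \<longrightarrow> (p, y) \<notin> H)))" for p
  have \<phi>: "\<phi> p < \<Omega> \<and> (open {p} \<longrightarrow> (\<forall>y. \<phi> p < y \<and> y < \<Omega> \<longrightarrow> (p, y) \<notin> H))" if p: "p < \<Omega>" for p
  proof -
    obtain z where "z < \<Omega> \<and> (open {p} \<longrightarrow> (\<forall>y. z < y \<and> y < \<Omega> \<longrightarrow> (p, y) \<notin> H))"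
      using bounded[OF p] by blast
    then show ?thesis
      unfolding \<phi>_def by (rule someI)
  qed
  then have "\<And>p. p < \<Omega> \<Longrightarrow> \<phi> p < \<Omega>"
    by blast
  then obtain p y where "p < \<Omega>" "open {p}" "\<phi> p < y" "y < \<Omega>" "(p, y) \<in> H"
    using column_exceeds_bounds[OF uncount init_count H diag] by blast
  then show False
    using \<phi> by blast
qed

theorem mainTheorem2:
  fixes \<Omega> :: "'a :: {wellorder, linorder_topology}"
  assumes top: "\<forall>x. x \<le> \<Omega>"
    and uncount: "uncountable {..<\<Omega>}"
    and init_count: "\<forall>y < \<Omega>. countable {..<y}"
  shows "\<not> regular_space (graph_topology (subtopology euclidean {..<\<Omega>}) (euclidean :: 'a topology))"
proof
  let ?W = "{..<\<Omega>}"
  let ?X = "subtopology euclidean ?W"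
  let ?Y = "euclidean :: 'a topology"
  let ?F = "graph_nbhd ?X ?Y"
  assume regular: "regular_space (graph_topology ?X ?Y)"
  define f where "f = restrict (\<lambda>x. x) ?W"
  have f_cont: "f \<in> cont_maps ?X ?Y"
    unfolding f_def by (rule restrict_id_cont_maps)
  then have f: "f \<in> ?F (?W \<times> ?W)"
    by (simp add: graph_nbhd_iff f_def)
  have "openin (prod_topology ?X ?Y) (?W \<times> ?W)"
    by (simp add: openin_prod_Times_iff openin_subtopology_self)
  then obtain H where H: "openin (prod_topology ?X ?Y) H" "f \<in> ?F H"
      "graph_topology ?X ?Y closure_of ?F H \<subseteq> ?F (?W \<times> ?W)"
    using regular_graph_topology_shrink[OF regular _ f] by blast
  have diag: "(x, x) \<in> H" if "x < \<Omega>" for x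
    using H(2) that unfolding graph_nbhd_iff f_def by auto
  obtain p where p: "p < \<Omega>" "open {p}" "\<And>z. z < \<Omega> \<Longrightarrow> \<exists>y. z < y \<and> y < \<Omega> \<and> (p, y) \<in> H"
    using cofinal_column[OF uncount init_count H(1) diag] by blast
  have p_clopen: "openin ?X {p}" "closedin ?X {p}"
    using isolated_point_clopen_in_subtopology[OF p(2)] p(1) by simp_all
  have "redefine_at ?X f p \<Omega> \<in> ?F (?W \<times> ?W)"
    using redefine_at_in_closure[OF H(2) p_clopen _ cofinal_below_meets_neighbourhoods[OF p(3,1)]] H(3)
    by auto
  then have "(p, \<Omega>) \<in> ?W \<times> ?W"
    using redefine_at_graph_nbhd_iff[OF f_cont p_clopen] by simp
  then show False
    by simp
qed

end
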